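(* Let $G$ be a connected graph of order $n$. Then $\mathrm{sn}(G)=n-1$ if and only if $G=K_n$. Also, $\overline{\mathrm{scs}}(G)=n-1$ if and only if $G=K_n$.
   Context: All graphs are finite and simple. For a graph $G=(V,E)$ and an integer $k\ge\chi(G)$, a proper $k$-colouring is a map $c:V\to[k]=\{1,\dots,k\}$ with $c(u)\neq c(v)$ for every edge $uv$. A set $S\subseteq V$ is a determining set for $(G,c)$ if there is no proper $k$-colouring $c'\neq c$ of $G$ with $c'(s)=c(s)$ for all $s\in S$. A critical set for $(G,c)$ is an inclusion-minimal determining set. $\mathrm{scs}(G,c)$ and $\mathrm{lcs}(G,c)$ denote the size of a smallest resp. largest critical set for $(G,c)$. $\mathrm{sn}(G,k)$ is the minimum of $\mathrm{scs}(G,c)$ over all proper $k$-colourings $c$ (equivalently, the minimum number of vertices coloured in a partial colouring that extends uniquely to a proper $k$-colouring); $\overline{\mathrm{scs}}(G,k)$ is the maximum of $\mathrm{scs}(G,c)$ over all proper $k$-colourings $c$. When $k=\chi(G)$ the second argument is omitted: $\mathrm{sn}(G)=\mathrm{sn}(G,\chi(G))$, $\overline{\mathrm{scs}}(G)=\overline{\mathrm{scs}}(G,\chi(G))$. $K_n$ is the complete graph on $n$ vertices. *)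

theory Defs
  imports Main
begin

definition simple_graph :: "'a set \<Rightarrow> 'a set set \<Rightarrow> bool" where
  "simple_graph V E \<longleftrightarrow> finite V \<and>
     (\<forall>e\<in>E. \<exists>u v. e = {u, v} \<and> u \<noteq> v \<and> u \<in> V \<and> v \<in> V)"

definition adj :: "'a set set \<Rightarrow> 'a \<Rightarrow> 'a \<Rightarrow> bool" where
  "adj E u v \<longleftrightarrow> {u, v} \<in> E"

definition connected_graph :: "'a set \<Rightarrow> 'a set set \<Rightarrow> bool" where
  "connected_graph V E \<longleftrightarrow> V \<noteq> {} \<and>
     (\<forall>u\<in>V. \<forall>v\<in>V. (\<lambda>x y. adj E x y \<and> x \<in> V \<and> y \<in> V)\<^sup>*\<^sup>* u v)"

definition complete_graph :: "'a set \<Rightarrow> 'a set set \<Rightarrow> bool" where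
  "complete_graph V E \<longleftrightarrow> (\<forall>u\<in>V. \<forall>v\<in>V. u \<noteq> v \<longrightarrow> {u, v} \<in> E)"

text \<open>Proper k-colouring c : V \<rightarrow> {1..k}; only values on V matter.\<close>
definition proper_colouring :: "'a set \<Rightarrow> 'a set set \<Rightarrow> nat \<Rightarrow> ('a \<Rightarrow> nat) \<Rightarrow> bool" where
  "proper_colouring V E k c \<longleftrightarrow> (\<forall>v\<in>V. c v \<in> {1..k}) \<and>
     (\<forall>u\<in>V. \<forall>v\<in>V. {u, v} \<in> E \<longrightarrow> c u \<noteq> c v)"

definition chromatic_number :: "'a set \<Rightarrow> 'a set set \<Rightarrow> nat" where
  "chromatic_number V E = (LEAST k. \<exists>c. proper_colouring V E k c)"

definition determining_set :: "'a set \<Rightarrow> 'a set set \<Rightarrow> nat \<Rightarrow> ('a \<Rightarrow> nat) \<Rightarrow> 'a set \<Rightarrow> bool" where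
  "determining_set V E k c S \<longleftrightarrow> S \<subseteq> V \<and>
     \<not> (\<exists>c'. proper_colouring V E k c' \<and> (\<exists>v\<in>V. c' v \<noteq> c v) \<and> (\<forall>s\<in>S. c' s = c s))"

definition critical_set :: "'a set \<Rightarrow> 'a set set \<Rightarrow> nat \<Rightarrow> ('a \<Rightarrow> nat) \<Rightarrow> 'a set \<Rightarrow> bool" where
  "critical_set V E k c S \<longleftrightarrow> determining_set V E k c S \<and>
     (\<forall>T. T \<subset> S \<longrightarrow> \<not> determining_set V E k c T)"

definition scs :: "'a set \<Rightarrow> 'a set set \<Rightarrow> nat \<Rightarrow> ('a \<Rightarrow> nat) \<Rightarrow> nat" where
  "scs V E k c = Min {card S | S. critical_set V E k c S}"

definition sn_k :: "'a set \<Rightarrow> 'a set set \<Rightarrow> nat \<Rightarrow> nat" where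
  "sn_k V E k = Min {scs V E k c | c. proper_colouring V E k c}"

definition scs_bar_k :: "'a set \<Rightarrow> 'a set set \<Rightarrow> nat \<Rightarrow> nat" where
  "scs_bar_k V E k = Max {scs V E k c | c. proper_colouring V E k c}"

definition sn :: "'a set \<Rightarrow> 'a set set \<Rightarrow> nat" where
  "sn V E = sn_k V E (chromatic_number V E)"

definition scs_bar :: "'a set \<Rightarrow> 'a set set \<Rightarrow> nat" where
  "scs_bar V E = scs_bar_k V E (chromatic_number V E)"

end

theory Submission
  imports Defs
begin

text \<open>For a complete graph every \<open>n\<close>-colouring is a bijection onto \<open>[n]\<close>; a set determines it
  exactly when it misses at most one vertex (swapping the colours of two missed vertices gives
  another colouring), so every critical set has \<open>n - 1\<close> elements.

  For a connected non-complete graph and a \<open>\<chi>\<close>-colouring \<open>c\<close>, call \<open>v\<close> a b-vertex if it sees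
  every colour other than its own; such a vertex is forced by its neighbourhood, and by minimality
  of \<open>\<chi>\<close> every colour class contains one. We find two b-vertices \<open>x \<noteq> y\<close> that are non-adjacent
  or such that \<open>x\<close> also sees the colour of \<open>y\<close> at a vertex other than \<open>y\<close>: if every vertex is a
  b-vertex, take a non-edge; otherwise connectivity gives an edge \<open>ab\<close> with \<open>b\<close> a b-vertex and
  \<open>a\<close> not, and we take \<open>x = b\<close> and \<open>y\<close> a b-vertex of colour \<open>c a\<close>. Then the colour of \<open>x\<close>, and
  afterwards that of \<open>y\<close>, is forced by \<open>V - {x, y}\<close>. Hence \<open>scs(G, c) \<le> n - 2\<close> for every
  \<open>\<chi>\<close>-colouring, so neither the minimum nor the maximum of \<open>scs(G, c)\<close> over the
  \<open>\<chi>\<close>-colourings equals \<open>n - 1\<close>.\<close>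

lemma simple_graph_finite: "simple_graph V E \<Longrightarrow> finite V"
  unfolding simple_graph_def by simp

lemma simple_graph_edgeD:
  assumes "simple_graph V E" and "{u, v} \<in> E"
  shows "u \<noteq> v" and "u \<in> V" and "v \<in> V"
proof -
  obtain a b where "{u, v} = {a, b}" "a \<noteq> b" "a \<in> V" "b \<in> V"
    using assms unfolding simple_graph_def by blast
  then show "u \<noteq> v" and "u \<in> V" and "v \<in> V"
    by (auto simp: doubleton_eq_iff)
qed

lemma proper_colouring_if_inj_on:
  assumes "simple_graph V E" and "inj_on c V" and "c ` V \<subseteq> {1..k}"
  shows "proper_colouring V E k c"
  unfolding proper_colouring_def
  using assms simple_graph_edgeD(1)[OF assms(1)] by (auto dest: inj_onD)

lemma proper_colouring_card_vertices:
  assumes "simple_graph V E"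
  shows "\<exists>c. proper_colouring V E (card V) c"
proof -
  obtain h where h: "bij_betw h V {0..<card V}"
    using ex_bij_betw_finite_nat simple_graph_finite[OF assms] by blast
  have "inj_on (\<lambda>v. h v + 1) V"
    using bij_betw_imp_inj_on[OF h] by (simp add: inj_on_def)
  moreover have "(\<lambda>v. h v + 1) ` V \<subseteq> {1..card V}"
    using bij_betwE[OF h] by force
  ultimately show ?thesis
    using proper_colouring_if_inj_on[OF assms] by blast
qed

lemma chromatic_number_le: "proper_colouring V E k c \<Longrightarrow> chromatic_number V E \<le> k"
  unfolding chromatic_number_def by (rule Least_le) blast

lemma proper_colouring_chromatic_number:
  assumes "simple_graph V E"
  shows "\<exists>c. proper_colouring V E (chromatic_number V E) c"
  unfolding chromatic_number_def
  by (rule LeastI_ex) (use proper_colouring_card_vertices[OF assms] in blast)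

subsection \<open>Critical sets\<close>

lemma determining_set_contains_critical_set:
  assumes "finite V" and "determining_set V E k c S"
  shows "\<exists>T\<subseteq>S. critical_set V E k c T"
proof -
  define D where "D = {T. T \<subseteq> S \<and> determining_set V E k c T}"
  have "finite S"
    using assms unfolding determining_set_def by (blast intro: finite_subset)
  then have "finite D"
    unfolding D_def by (simp add: finite_subset[of _ "Pow S"] subset_eq)
  moreover have "S \<in> D"
    using assms(2) unfolding D_def by simp
  ultimately obtain T where "T \<in> D" and "\<forall>T'\<in>D. T' \<subseteq> T \<longrightarrow> T = T'"
    using finite_has_minimal2 by metis
  then have "critical_set V E k c T"
    unfolding critical_set_def D_def by auto
  with \<open>T \<in> D\<close> show ?thesis
    unfolding D_def by blast
qed

lemma scs_le_card:
  assumes "finite V" and "critical_set V E k c T"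
  shows "scs V E k c \<le> card T"
proof -
  have "{card S | S. critical_set V E k c S} \<subseteq> {0..card V}"
    unfolding critical_set_def determining_set_def using assms(1) by (auto intro: card_mono)
  then have "finite {card S | S. critical_set V E k c S}"
    by (rule finite_subset) simp
  then show ?thesis
    unfolding scs_def using assms(2) by (intro Min_le) blast+
qed

lemma scs_le_determining_set:
  assumes "finite V" and "determining_set V E k c S"
  shows "scs V E k c \<le> card S"
proof -
  obtain T where "T \<subseteq> S" and "critical_set V E k c T"
    using determining_set_contains_critical_set[OF assms] by blast
  moreover have "finite S"
    using assms unfolding determining_set_def by (blast intro: finite_subset)
  ultimately show ?thesis
    using scs_le_card[OF assms(1)] card_mono le_trans by blast
qed

subsection \<open>b-vertices\<close>

definition b_vertex :: "'a set \<Rightarrow> 'a set set \<Rightarrow> nat \<Rightarrow> ('a \<Rightarrow> nat) \<Rightarrow> 'a \<Rightarrow> bool" where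
  "b_vertex V E k c v \<longleftrightarrow> v \<in> V \<and>
     (\<forall>j\<in>{1..k}. j \<noteq> c v \<longrightarrow> (\<exists>w\<in>V. {v, w} \<in> E \<and> c w = j))"

lemma colour_forced_by_neighbours:
  assumes "proper_colouring V E k c'" and "v \<in> V"
    and "\<forall>j\<in>{1..k}. j \<noteq> c v \<longrightarrow> (\<exists>w\<in>V. {v, w} \<in> E \<and> c' w = j)"
  shows "c' v = c v"
  using assms unfolding proper_colouring_def by metis

lemma colouring_avoiding_colour:
  assumes pc: "proper_colouring V E k c" and "i \<in> {1..k}"
    and no_b: "\<forall>v\<in>V. c v = i \<longrightarrow> \<not> b_vertex V E k c v"
  shows "\<exists>c'. proper_colouring V E k c' \<and> (\<forall>v\<in>V. c' v \<noteq> i)"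
proof -
  have "\<exists>j\<in>{1..k}. j \<noteq> i \<and> (\<forall>w\<in>V. {v, w} \<in> E \<longrightarrow> c w \<noteq> j)"
    if "v \<in> V" "c v = i" for v
    using no_b that unfolding b_vertex_def by blast
  then obtain m where m: "\<And>v. v \<in> V \<Longrightarrow> c v = i \<Longrightarrow>
      m v \<in> {1..k} \<and> m v \<noteq> i \<and> (\<forall>w\<in>V. {v, w} \<in> E \<longrightarrow> c w \<noteq> m v)"
    by metis
  define c' where "c' v = (if c v = i then m v else c v)" for v
  have "proper_colouring V E k c'"
    using pc m unfolding proper_colouring_def c'_def by (simp add: insert_commute) metis
  moreover have "\<forall>v\<in>V. c' v \<noteq> i"
    using m unfolding c'_def by simp
  ultimately show ?thesis
    by blast
qed

lemma proper_colouring_drop_colour: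
  assumes "proper_colouring V E k c" and "i \<in> {1..k}" and "\<forall>v\<in>V. c v \<noteq> i"
  shows "proper_colouring V E (k - 1) (\<lambda>v. if c v = k then i else c v)"
  unfolding proper_colouring_def
proof (intro conjI ballI impI)
  fix v assume "v \<in> V"
  then show "(if c v = k then i else c v) \<in> {1..k - 1}"
    using assms unfolding proper_colouring_def by auto
next
  fix u v assume "u \<in> V" "v \<in> V" "{u, v} \<in> E"
  then show "(if c u = k then i else c u) \<noteq> (if c v = k then i else c v)"
    using assms unfolding proper_colouring_def by metis
qed

lemma chromatic_colouring_has_b_vertex:
  assumes pc: "proper_colouring V E (chromatic_number V E) c" and i: "i \<in> {1..chromatic_number V E}"
  shows "\<exists>v\<in>V. c v = i \<and> b_vertex V E (chromatic_number V E) c v"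
proof (rule ccontr)
  assume "\<not> ?thesis"
  then obtain c' where "proper_colouring V E (chromatic_number V E) c'" "\<forall>v\<in>V. c' v \<noteq> i"
    using colouring_avoiding_colour[OF pc i] by blast
  then have "chromatic_number V E \<le> chromatic_number V E - 1"
    using chromatic_number_le proper_colouring_drop_colour[OF _ i] by blast
  with i show False
    by simp
qed

lemma b_vertex_colour_forced:
  assumes "proper_colouring V E k c'" and bv: "b_vertex V E k c v"
    and "\<forall>w. {v, w} \<in> E \<longrightarrow> c' w = c w"
  shows "c' v = c v"
proof -
  have "\<forall>j\<in>{1..k}. j \<noteq> c v \<longrightarrow> (\<exists>w\<in>V. {v, w} \<in> E \<and> c' w = j)"
    using assms unfolding b_vertex_def by metis
  then show ?thesis
    using colour_forced_by_neighbours[OF assms(1)] bv unfolding b_vertex_def by blast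
qed

lemma determining_set_delete_b_vertex:
  assumes sg: "simple_graph V E" and bv: "b_vertex V E k c v"
  shows "determining_set V E k c (V - {v})"
  unfolding determining_set_def
proof (intro conjI notI; (elim exE conjE)?)
  show "V - {v} \<subseteq> V"
    by blast
  fix c' assume pc': "proper_colouring V E k c'" and agree: "\<forall>s\<in>V - {v}. c' s = c s"
    and differ: "\<exists>u\<in>V. c' u \<noteq> c u"
  have "c' v = c v"
    using agree simple_graph_edgeD[OF sg]
    by (intro b_vertex_colour_forced[OF pc' bv]) blast
  with agree differ show False
    by blast
qed

lemma determining_set_delete_b_vertex_pair:
  assumes sg: "simple_graph V E"
    and bx: "b_vertex V E k c x" and b_y: "b_vertex V E k c y" and "x \<noteq> y"
    and other: "{x, y} \<notin> E \<or> (\<exists>w\<in>V. w \<noteq> y \<and> {x, w} \<in> E \<and> c w = c y)"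
  shows "determining_set V E k c (V - {x, y})"
  unfolding determining_set_def
proof (intro conjI notI; (elim exE conjE)?)
  show "V - {x, y} \<subseteq> V"
    by blast
  fix c' assume pc': "proper_colouring V E k c'" and agree: "\<forall>s\<in>V - {x, y}. c' s = c s"
    and differ: "\<exists>v\<in>V. c' v \<noteq> c v"
  have "\<exists>w\<in>V. {x, w} \<in> E \<and> c' w = j" if j: "j \<in> {1..k}" "j \<noteq> c x" for j
  proof -
    obtain w where "w \<in> V" "{x, w} \<in> E" "w \<noteq> y" "c w = j"
      using bx other j unfolding b_vertex_def by metis
    moreover have "w \<noteq> x"
      using simple_graph_edgeD(1)[OF sg \<open>{x, w} \<in> E\<close>] by simp
    ultimately show ?thesis
      using agree by auto
  qed
  then have cx: "c' x = c x"
    using colour_forced_by_neighbours[OF pc'] bx unfolding b_vertex_def by blast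
  have "c' y = c y"
    using agree cx simple_graph_edgeD[OF sg]
    by (intro b_vertex_colour_forced[OF pc' b_y]) blast
  with cx agree differ show False
    by blast
qed

lemma rtranclp_crossing_step:
  "R\<^sup>*\<^sup>* u v \<Longrightarrow> P u \<Longrightarrow> \<not> P v \<Longrightarrow> \<exists>a b. R a b \<and> P a \<and> \<not> P b"
  by (induction rule: rtranclp_induct) blast+

lemma b_vertex_pair_exists:
  assumes conn: "connected_graph V E" and nc: "\<not> complete_graph V E"
    and pc: "proper_colouring V E (chromatic_number V E) c"
  shows "\<exists>x y. b_vertex V E (chromatic_number V E) c x \<and> b_vertex V E (chromatic_number V E) c y \<and>
    x \<noteq> y \<and> ({x, y} \<notin> E \<or> (\<exists>w\<in>V. w \<noteq> y \<and> {x, w} \<in> E \<and> c w = c y))"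
proof (cases "\<forall>v\<in>V. b_vertex V E (chromatic_number V E) c v")
  case True
  from nc obtain x y where "x \<in> V" "y \<in> V" "x \<noteq> y" "{x, y} \<notin> E"
    unfolding complete_graph_def by blast
  with True show ?thesis
    by blast
next
  case False
  let ?b = "b_vertex V E (chromatic_number V E) c"
  have colour_range: "c v \<in> {1..chromatic_number V E}" if "v \<in> V" for v
    using pc that unfolding proper_colouring_def by blast
  obtain z where "z \<in> V" "\<not> ?b z"
    using False by blast
  moreover obtain b0 where "b0 \<in> V" "?b b0"
    using chromatic_colouring_has_b_vertex[OF pc colour_range[OF \<open>z \<in> V\<close>]] by blast
  ultimately have "(\<lambda>x y. adj E x y \<and> x \<in> V \<and> y \<in> V)\<^sup>*\<^sup>* z b0"
    using conn unfolding connected_graph_def by blast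
  then obtain a b where ab: "{a, b} \<in> E" "a \<in> V" "b \<in> V" "\<not> ?b a" "?b b"
    using rtranclp_crossing_step[where P = "\<lambda>v. \<not> ?b v"] \<open>\<not> ?b z\<close> \<open>?b b0\<close>
    unfolding adj_def by blast
  obtain b' where b': "b' \<in> V" "c b' = c a" "?b b'"
    using chromatic_colouring_has_b_vertex[OF pc colour_range[OF \<open>a \<in> V\<close>]] by blast
  have "c a \<noteq> c b"
    using pc ab unfolding proper_colouring_def by blast
  then have "b \<noteq> b'" "a \<noteq> b'"
    using ab(4) b' by auto
  have "\<exists>w\<in>V. w \<noteq> b' \<and> {b, w} \<in> E \<and> c w = c b'"
    using ab(1,2) b'(2) \<open>a \<noteq> b'\<close> by (auto simp: insert_commute)
  with \<open>b \<noteq> b'\<close> ab(5) b'(3) show ?thesis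
    by blast
qed

lemma noncomplete_scs_le:
  assumes sg: "simple_graph V E" and "connected_graph V E" and "\<not> complete_graph V E"
    and "proper_colouring V E (chromatic_number V E) c"
  shows "scs V E (chromatic_number V E) c \<le> card V - 2"
proof -
  obtain x y where bx: "b_vertex V E (chromatic_number V E) c x"
    and b_y: "b_vertex V E (chromatic_number V E) c y" and "x \<noteq> y"
    and "{x, y} \<notin> E \<or> (\<exists>w\<in>V. w \<noteq> y \<and> {x, w} \<in> E \<and> c w = c y)"
    using b_vertex_pair_exists[OF assms(2-4)] by blast
  then have "determining_set V E (chromatic_number V E) c (V - {x, y})"
    by (intro determining_set_delete_b_vertex_pair[OF sg])
  moreover have "card (V - {x, y}) = card V - 2"
    using bx b_y \<open>x \<noteq> y\<close> by (simp add: b_vertex_def card_Diff_subset simple_graph_finite[OF sg])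
  ultimately show ?thesis
    using scs_le_determining_set[OF simple_graph_finite[OF sg]] by metis
qed

subsection \<open>Complete graphs\<close>

lemma complete_graph_colouring_inj_on:
  assumes "complete_graph V E" and "proper_colouring V E k c"
  shows "inj_on c V"
  using assms unfolding complete_graph_def proper_colouring_def inj_on_def by blast

lemma complete_graph_chromatic_number:
  assumes sg: "simple_graph V E" and cg: "complete_graph V E"
  shows "chromatic_number V E = card V"
proof (rule antisym)
  show "chromatic_number V E \<le> card V"
    using proper_colouring_card_vertices[OF sg] chromatic_number_le by blast
  obtain c where pc: "proper_colouring V E (chromatic_number V E) c"
    using proper_colouring_chromatic_number[OF sg] by blast
  have "card V = card (c ` V)"
    using card_image[OF complete_graph_colouring_inj_on[OF cg pc]] by simp
  also have "\<dots> \<le> card {1..chromatic_number V E}"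
    using pc unfolding proper_colouring_def by (intro card_mono) auto
  finally show "card V \<le> chromatic_number V E"
    by simp
qed

lemma complete_graph_colouring_image:
  assumes cg: "complete_graph V E"
    and pc: "proper_colouring V E (card V) c"
  shows "c ` V = {1..card V}"
proof (rule card_subset_eq)
  show "c ` V \<subseteq> {1..card V}"
    using pc unfolding proper_colouring_def by auto
  show "card (c ` V) = card {1..card V}"
    using card_image[OF complete_graph_colouring_inj_on[OF cg pc]] by simp
qed simp

lemma complete_graph_b_vertex:
  assumes cg: "complete_graph V E" and pc: "proper_colouring V E (card V) c" and "v \<in> V"
  shows "b_vertex V E (card V) c v"
  using assms complete_graph_colouring_image[OF cg pc]
  unfolding b_vertex_def complete_graph_def by (metis imageE)

lemma complete_graph_determining_set_misses_le_one:
  assumes sg: "simple_graph V E" and cg: "complete_graph V E"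
    and pc: "proper_colouring V E (card V) c" and det: "determining_set V E (card V) c S"
  shows "card (V - S) \<le> 1"
proof (rule ccontr)
  assume "\<not> card (V - S) \<le> 1"
  then obtain x y where xy: "x \<in> V - S" "y \<in> V - S" "x \<noteq> y"
    using card_le_Suc0_iff_eq[of "V - S"] simple_graph_finite[OF sg] by auto
  have inj: "inj_on c V"
    using complete_graph_colouring_inj_on[OF cg pc] .
  let ?c' = "c(x := c y, y := c x)"
  have "inj_on ?c' V"
    using inj xy unfolding inj_on_def by auto
  moreover have "?c' ` V \<subseteq> {1..card V}"
    using pc xy unfolding proper_colouring_def by auto
  ultimately have "proper_colouring V E (card V) ?c'"
    by (rule proper_colouring_if_inj_on[OF sg])
  moreover have "?c' x \<noteq> c x"
    using inj xy by (auto dest: inj_onD)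
  moreover have "\<forall>s\<in>S. ?c' s = c s"
    using xy by auto
  ultimately show False
    using det \<open>x \<in> V - S\<close> unfolding determining_set_def by blast
qed

lemma complete_graph_critical_set_card:
  assumes sg: "simple_graph V E" and cg: "complete_graph V E"
    and pc: "proper_colouring V E (card V) c" and crit: "critical_set V E (card V) c S"
  shows "card S = card V - 1"
proof (cases "V = {}")
  case True
  with crit show ?thesis
    unfolding critical_set_def determining_set_def by auto
next
  case False
  then obtain v where "v \<in> V"
    by blast
  have det: "determining_set V E (card V) c S"
    using crit unfolding critical_set_def by blast
  then have "S \<subseteq> V"
    unfolding determining_set_def by blast
  have "S \<noteq> V"
  proof
    assume "S = V"
    then have "V - {v} \<subset> S"
      using \<open>v \<in> V\<close> by blast
    moreover have "determining_set V E (card V) c (V - {v})"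
      using determining_set_delete_b_vertex[OF sg complete_graph_b_vertex[OF cg pc \<open>v \<in> V\<close>]] .
    ultimately show False
      using crit unfolding critical_set_def by blast
  qed
  with \<open>S \<subseteq> V\<close> have "card (V - S) \<noteq> 0"
    using simple_graph_finite[OF sg] by auto
  then have "card (V - S) = 1"
    using complete_graph_determining_set_misses_le_one[OF sg cg pc det] by linarith
  with \<open>S \<subseteq> V\<close> show ?thesis
    using card_Diff_subset[of S V] finite_subset[OF \<open>S \<subseteq> V\<close> simple_graph_finite[OF sg]] by simp
qed

lemma complete_graph_scs:
  assumes sg: "simple_graph V E" and cg: "complete_graph V E"
    and pc: "proper_colouring V E (card V) c" and "V \<noteq> {}"
  shows "scs V E (card V) c = card V - 1"
proof -
  obtain v where "v \<in> V"
    using \<open>V \<noteq> {}\<close> by blast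
  then obtain T where "critical_set V E (card V) c T"
    using determining_set_contains_critical_set[OF simple_graph_finite[OF sg]
        determining_set_delete_b_vertex[OF sg complete_graph_b_vertex[OF cg pc]]] by blast
  then have "{card S | S. critical_set V E (card V) c S} = {card V - 1}"
    using complete_graph_critical_set_card[OF sg cg pc] by (auto intro!: exI[of _ T])
  then show ?thesis
    unfolding scs_def by simp
qed

lemma complete_graph_chromatic_scs_values:
  assumes sg: "simple_graph V E" and cg: "complete_graph V E" and "V \<noteq> {}"
  shows "{scs V E (chromatic_number V E) c | c. proper_colouring V E (chromatic_number V E) c}
    = {card V - 1}"
proof -
  obtain c0 where "proper_colouring V E (card V) c0"
    using proper_colouring_card_vertices[OF sg] by blast
  then show ?thesis
    using complete_graph_scs[OF sg cg _ \<open>V \<noteq> {}\<close>]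
    unfolding complete_graph_chromatic_number[OF sg cg] by (auto intro!: exI[of _ c0])
qed

theorem theorem2:
  fixes V :: "'a set" and E :: "'a set set" and n :: nat
  assumes "simple_graph V E"
    and "connected_graph V E"
    and "n = card V"
  shows "(sn V E = n - 1 \<longleftrightarrow> complete_graph V E) \<and>
         (scs_bar V E = n - 1 \<longleftrightarrow> complete_graph V E)"
proof -
  define A where "A = {scs V E (chromatic_number V E) c | c. proper_colouring V E (chromatic_number V E) c}"
  have sn_A: "sn V E = Min A" and scs_bar_A: "scs_bar V E = Max A"
    unfolding sn_def sn_k_def scs_bar_def scs_bar_k_def A_def by simp_all
  show ?thesis
  proof (cases "complete_graph V E")
    case True
    have "V \<noteq> {}"
      using assms(2) unfolding connected_graph_def by simp
    then have "A = {n - 1}"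
      unfolding A_def assms(3) by (rule complete_graph_chromatic_scs_values[OF assms(1) True])
    with True show ?thesis
      using sn_A scs_bar_A by simp
  next
    case False
    have "A \<noteq> {}"
      using proper_colouring_chromatic_number[OF assms(1)] unfolding A_def by blast
    moreover have "A \<subseteq> {..n - 2}"
      using noncomplete_scs_le[OF assms(1,2) False] assms(3) unfolding A_def by auto
    ultimately have "Min A \<le> n - 2" "Max A \<le> n - 2"
      using finite_subset[of A "{..n - 2}"] Min_in Max_in by fastforce+
    moreover have "2 \<le> n"
      using False assms(3) simple_graph_finite[OF assms(1)] card_le_Suc0_iff_eq
      unfolding complete_graph_def by (metis not_less_eq_eq numeral_2_eq_2)
    ultimately show ?thesis
      using False sn_A scs_bar_A by linarith
  qed
qed

end
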